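(* Let $H \le G$ be finite groups such that the interval $[H,G]$ is a Boolean lattice. Then there exists $g \in G$ with $\langle H, g\rangle = G$.
   Context: The interval $[H,G]$ is the lattice of subgroups $K$ with $H \le K \le G$ (meet = intersection, join = generated subgroup). A finite lattice is Boolean if it is isomorphic to the lattice of all subsets of a finite set. *)

theory Defs
  imports "HOL-Algebra.Algebra"
begin

definition subgroup_interval :: "('a, 'b) monoid_scheme \<Rightarrow> 'a set \<Rightarrow> 'a set set" where
  "subgroup_interval G H = {K. subgroup K G \<and> H \<subseteq> K}"

text \<open>A finite lattice is Boolean iff it is isomorphic to the lattice of all subsets of a
  finite set. A lattice isomorphism is the same as an order isomorphism (a bijection
  preserving and reflecting the order); the finite set may be taken to be {..<n}.\<close>
definition boolean_interval :: "('a, 'b) monoid_scheme \<Rightarrow> 'a set \<Rightarrow> bool" where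
  "boolean_interval G H \<longleftrightarrow>
     (\<exists>(n::nat) (f :: 'a set \<Rightarrow> nat set).
        bij_betw f (subgroup_interval G H) (Pow {..<n}) \<and>
        (\<forall>K\<in>subgroup_interval G H. \<forall>K'\<in>subgroup_interval G H. K \<subseteq> K' \<longleftrightarrow> f K \<subseteq> f K'))"

end

theory Submission
  imports Defs
begin

text \<open>Let the Boolean interval [H,G] have atoms A_j and coatoms M_j (j < n), so that
  A_j \<subseteq> M_k exactly when j \<noteq> k. Choosing a_j \<in> A_j - M_j, the product
  g = a_0 \<cdots> a_(n-1) lies outside every M_j, because all factors but a_j lie in M_j.
  Every proper subgroup of the interval lies below some coatom, so the subgroup
  generated by H and g is G.\<close>

lemma (in group) subgroup_mult_mem_iff_right:
  assumes "subgroup M G" "x \<in> carrier G" "y \<in> M"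
  shows "x \<otimes> y \<in> M \<longleftrightarrow> x \<in> M"
proof
  have y: "y \<in> carrier G" using assms subgroup.subset by blast
  assume "x \<otimes> y \<in> M"
  then have "x \<otimes> y \<otimes> inv y \<in> M"
    using assms by (simp add: subgroup.m_closed subgroup.m_inv_closed)
  then show "x \<in> M" using assms(2) y by (simp add: m_assoc)
qed (use assms in \<open>simp add: subgroup.m_closed\<close>)

lemma (in group) subgroup_mult_mem_iff_left:
  assumes "subgroup M G" "x \<in> M" "y \<in> carrier G"
  shows "x \<otimes> y \<in> M \<longleftrightarrow> y \<in> M"
proof
  have x: "x \<in> carrier G" using assms subgroup.subset by blast
  assume "x \<otimes> y \<in> M"
  then have "inv x \<otimes> (x \<otimes> y) \<in> M"
    using assms by (simp add: subgroup.m_closed subgroup.m_inv_closed)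
  then show "y \<in> M" using assms(3) x by (simp add: m_assoc[symmetric])
qed (use assms in \<open>simp add: subgroup.m_closed\<close>)

lemma (in group) exists_avoiding_subgroups:
  fixes n :: nat
  assumes M: "\<And>j. j < n \<Longrightarrow> subgroup (M j) G"
    and A: "\<And>j. j < n \<Longrightarrow> subgroup (A j) G"
    and not_below: "\<And>j. j < n \<Longrightarrow> \<not> A j \<subseteq> M j"
    and below: "\<And>j k. j < n \<Longrightarrow> k < n \<Longrightarrow> k \<noteq> j \<Longrightarrow> A j \<subseteq> M k"
  shows "\<exists>g\<in>carrier G. \<forall>j<n. g \<notin> M j"
proof -
  have partial: "\<exists>g\<in>carrier G. (\<forall>j<m. g \<notin> M j) \<and> (\<forall>j. m \<le> j \<and> j < n \<longrightarrow> g \<in> M j)"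
    if "m \<le> n" for m
    using that
  proof (induction m)
    case 0
    show ?case using M subgroup.one_closed by blast
  next
    case (Suc m)
    then obtain g where g: "g \<in> carrier G" "\<forall>j<m. g \<notin> M j" "\<forall>j. m \<le> j \<and> j < n \<longrightarrow> g \<in> M j"
      by auto
    from Suc.prems obtain a where a: "a \<in> A m" "a \<notin> M m"
      using not_below[of m] by auto
    have a_carrier: "a \<in> carrier G"
      using a(1) Suc.prems subgroup.subset[OF A[of m]] by auto
    have a_M: "a \<in> M k" if "k < n" "k \<noteq> m" for k
      using a(1) below[of m k] Suc.prems that by auto
    have "g \<otimes> a \<notin> M j" if "j < Suc m" for j
    proof (cases "j = m")
      case True
      then show ?thesis
        using Suc.prems g(3) a(2) a_carrier M subgroup_mult_mem_iff_left by auto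
    next
      case False
      then show ?thesis
        using that Suc.prems g(1,2) a_M M subgroup_mult_mem_iff_right by auto
    qed
    moreover have "g \<otimes> a \<in> M j" if "Suc m \<le> j" "j < n" for j
      using that g(3) a_M subgroup.m_closed[OF M] by simp
    ultimately show ?case using g(1) a_carrier by (intro bexI[of _ "g \<otimes> a"]) auto
  qed
  from partial[of n] show ?thesis by auto
qed

text \<open>The coatom M_j and the atom A_j correspond to {..<n} - {j} and {j}.\<close>

lemma order_iso_Pow_atoms_coatoms:
  fixes I :: "'a set set" and f :: "'a set \<Rightarrow> nat set"
  assumes bij: "bij_betw f I (Pow {..<n})"
    and ord: "\<forall>K\<in>I. \<forall>K'\<in>I. K \<subseteq> K' \<longleftrightarrow> f K \<subseteq> f K'"
    and top: "T \<in> I" "\<forall>K\<in>I. K \<subseteq> T"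
  obtains A M where "\<And>j. j < n \<Longrightarrow> A j \<in> I" and "\<And>j. j < n \<Longrightarrow> M j \<in> I"
    and "\<And>j. j < n \<Longrightarrow> \<not> A j \<subseteq> M j"
    and "\<And>j k. j < n \<Longrightarrow> k < n \<Longrightarrow> k \<noteq> j \<Longrightarrow> A j \<subseteq> M k"
    and "\<And>K. K \<in> I \<Longrightarrow> K \<noteq> T \<Longrightarrow> \<exists>j<n. K \<subseteq> M j"
proof
  define g where "g = inv_into I f"
  have gI: "g S \<in> I" and fg: "f (g S) = S" if "S \<subseteq> {..<n}" for S
    using that bij unfolding g_def
    by (auto intro: bij_betw_apply[OF bij_betw_inv_into] simp: bij_betw_inv_into_right)
  have fI: "f K \<subseteq> {..<n}" if "K \<in> I" for K
    using that bij bij_betw_apply by fastforce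
  define A where "A j = g {j}" for j
  define M where "M j = g ({..<n} - {j})" for j
  show AI: "A j \<in> I" if "j < n" for j
    unfolding A_def using that by (intro gI) auto
  have fA: "f (A j) = {j}" if "j < n" for j
    unfolding A_def using that by (intro fg) auto
  show MI: "M j \<in> I" for j
    unfolding M_def by (rule gI) auto
  have fM: "f (M j) = {..<n} - {j}" for j
    unfolding M_def by (rule fg) auto
  show "\<not> A j \<subseteq> M j" if "j < n" for j
    using ord AI MI fA fM that by auto
  show "A j \<subseteq> M k" if "j < n" "k < n" "k \<noteq> j" for j k
    using ord AI MI fA fM that by auto
  have fT: "f T = {..<n}"
    using ord top gI[of "{..<n}"] fg[of "{..<n}"] fI[OF top(1)] by blast
  show "\<exists>j<n. K \<subseteq> M j" if K: "K \<in> I" "K \<noteq> T" for K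
  proof -
    have "f K \<noteq> {..<n}"
      using K top fT bij by (metis bij_betw_imp_inj_on inj_onD)
    then obtain j where j: "j < n" "j \<notin> f K" using fI[OF K(1)] by auto
    then have "f K \<subseteq> f (M j)" using fI[OF K(1)] fM by auto
    then show ?thesis using j ord K(1) MI by blast
  qed
qed

theorem theorem2p4:
  fixes G (structure) and H :: "'a set"
  assumes "group G" and "finite (carrier G)" and "subgroup H G"
    and "boolean_interval G H"
  shows "\<exists>g\<in>carrier G. generate G (H \<union> {g}) = carrier G"
proof -
  interpret group G by fact
  let ?I = "subgroup_interval G H"
  have top: "carrier G \<in> ?I" "\<forall>K\<in>?I. K \<subseteq> carrier G"
    unfolding subgroup_interval_def
    using subgroup_self subgroup.subset[OF assms(3)] subgroup.subset by blast+
  obtain n :: nat and f :: "'a set \<Rightarrow> nat set" where iso: "bij_betw f ?I (Pow {..<n})"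
    and mono: "\<forall>K\<in>?I. \<forall>K'\<in>?I. K \<subseteq> K' \<longleftrightarrow> f K \<subseteq> f K'"
    using assms(4) unfolding boolean_interval_def by blast
  obtain A M where AI: "\<And>j. j < n \<Longrightarrow> A j \<in> ?I" and MI: "\<And>j. j < n \<Longrightarrow> M j \<in> ?I"
    and not_below: "\<And>j. j < n \<Longrightarrow> \<not> A j \<subseteq> M j"
    and below: "\<And>j k. j < n \<Longrightarrow> k < n \<Longrightarrow> k \<noteq> j \<Longrightarrow> A j \<subseteq> M k"
    and below_coatom: "\<And>K. K \<in> ?I \<Longrightarrow> K \<noteq> carrier G \<Longrightarrow> \<exists>j<n. K \<subseteq> M j"
    using order_iso_Pow_atoms_coatoms[OF iso mono top] by blast
  have "subgroup (M j) G" "subgroup (A j) G" if "j < n" for j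
    using MI[OF that] AI[OF that] unfolding subgroup_interval_def by blast+
  then obtain g where g: "g \<in> carrier G" "\<forall>j<n. g \<notin> M j"
    using exists_avoiding_subgroups[of n M A] not_below below by blast
  have gen: "H \<union> {g} \<subseteq> carrier G" using g(1) assms(3) subgroup.subset by blast
  have "generate G (H \<union> {g}) \<in> ?I" "g \<in> generate G (H \<union> {g})"
    using generate_is_subgroup[OF gen] generate.incl[of _ "H \<union> {g}" G]
    unfolding subgroup_interval_def by auto
  then have "generate G (H \<union> {g}) = carrier G" using below_coatom g(2) by blast
  with g(1) show ?thesis by blast
qed

end
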